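(* For all $\tau\in[-1,1)$, $P_u(\tau)>0$.
   Context: $P_u(\tau)=\sum_{k=0}^{22}c_k\tau^k$ with $(c_0,\dots,c_{22})=\bigl(\tfrac{335867}{539062},\tfrac{419712}{989125},-\tfrac{352463}{3539236},\tfrac{60789}{1703279},-\tfrac{132842}{11825541},\tfrac{43961}{54574472},\tfrac{39599}{12036926},-\tfrac{213665}{48625258},\tfrac{61644}{14973337},-\tfrac{107283}{33444500},\tfrac{44761}{18892011},-\tfrac{28249}{13550715},\tfrac{20641}{14839893},\tfrac{13459}{92774551},-\tfrac{4992}{34838093},-\tfrac{11771}{8149937},\tfrac{24115}{27631671},\tfrac{42106}{39550107},-\tfrac{21163}{32637441},-\tfrac{9782}{15918509},\tfrac{11581}{32652169},\tfrac{14692}{88640147},-\tfrac{12278}{123249611}\bigr)$. *)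

theory Defs
  imports Complex_Main
begin

definition Pu_coeffs :: "real list" where
  "Pu_coeffs = [335867/539062, 419712/989125, -352463/3539236, 60789/1703279,
    -132842/11825541, 43961/54574472, 39599/12036926, -213665/48625258,
    61644/14973337, -107283/33444500, 44761/18892011, -28249/13550715,
    20641/14839893, 13459/92774551, -4992/34838093, -11771/8149937,
    24115/27631671, 42106/39550107, -21163/32637441, -9782/15918509,
    11581/32652169, 14692/88640147, -12278/123249611]"

definition P_u :: "real \<Rightarrow> real" where
  "P_u \<tau> = (\<Sum>k\<le>22. Pu_coeffs ! k * \<tau> ^ k)"

end

theory Submission
  imports Defs
begin

text \<open>On \<open>[-1,1]\<close> the cubic part \<open>c\<^sub>0 + c\<^sub>1\<tau> + c\<^sub>2\<tau>\<^sup>2 + c\<^sub>3\<tau>\<^sup>3\<close> of \<open>P_u\<close> is at least its value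
  \<open>\<approx> 0.063\<close> at \<open>\<tau> = -1\<close>, as its expansion in powers of \<open>\<tau> + 1\<close> shows, while the remaining
  terms together are bounded below by minus the sum of \<open>\<bar>c\<^sub>k\<bar>\<close> over \<open>k \<ge> 4\<close>,
  which is \<open>\<approx> -0.04\<close>.\<close>

lemma sum_power_ge_neg_sum_abs:
  fixes c :: "nat \<Rightarrow> real" and t :: real
  assumes "\<bar>t\<bar> \<le> 1"
  shows "(\<Sum>k\<in>A. c k * t ^ k) \<ge> - (\<Sum>k\<in>A. \<bar>c k\<bar>)"
proof -
  have "c k * t ^ k \<ge> - \<bar>c k\<bar>" for k
  proof -
    have "\<bar>t ^ k\<bar> \<le> 1" using assms by (simp add: power_abs power_le_one)
    then have "\<bar>c k * t ^ k\<bar> \<le> \<bar>c k\<bar>" by (simp add: abs_mult mult_left_le)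
    then show ?thesis by linarith
  qed
  then show ?thesis by (simp add: sum_negf[symmetric] sum_mono)
qed

lemma cubic_ge_value_at_neg_one:
  fixes a b c d t :: real
  assumes "-1 \<le> t" "t \<le> 1"
    and "0 \<le> d" "3 * d \<le> b" "0 \<le> b - 2 * c + 3 * d"
  shows "a + b * t + c * t ^ 2 + d * t ^ 3 \<ge> a - b + c - d"
proof -
  define s where "s = t + 1"
  have s: "0 \<le> s" "s \<le> 2" using assms(1,2) by (simp_all add: s_def)
  have expansion: "a + b * t + c * t ^ 2 + d * t ^ 3
      = (a - b + c - d) + s * ((b - 2 * c + 3 * d) + (c - 3 * d) * s) + d * s ^ 3"
    by (simp add: s_def algebra_simps power2_eq_square power3_eq_cube)
  \<comment> \<open>the linear factor is nonnegative at \<open>s = 0\<close> and at \<open>s = 2\<close>, hence in between\<close>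
  have "0 \<le> (b - 2 * c + 3 * d) + (c - 3 * d) * s"
  proof (cases "c - 3 * d \<ge> 0")
    case True
    then show ?thesis using assms(5) s(1) by simp
  next
    case False
    then have "(c - 3 * d) * s \<ge> (c - 3 * d) * 2" using s(2) by (intro mult_left_mono_neg) simp_all
    then show ?thesis using assms(4) by (simp add: algebra_simps)
  qed
  then have "0 \<le> s * ((b - 2 * c + 3 * d) + (c - 3 * d) * s)" using s(1) by simp
  moreover have "0 \<le> d * s ^ 3" using assms(3) s(1) by simp
  ultimately show ?thesis unfolding expansion by linarith
qed

theorem lemma5p2:
  fixes \<tau> :: real
  assumes "-1 \<le> \<tau>" and "\<tau> < 1"
  shows "P_u \<tau> > 0"
proof -
  let ?c = "\<lambda>k. Pu_coeffs ! k"
  have "{..22::nat} = {..3} \<union> {4..22}" by auto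
  then have split: "P_u \<tau> = (\<Sum>k\<le>3. ?c k * \<tau> ^ k) + (\<Sum>k\<in>{4..22}. ?c k * \<tau> ^ k)"
    unfolding P_u_def by (simp add: sum.union_disjoint)
  have "(\<Sum>k\<le>3. ?c k * \<tau> ^ k) = ?c 0 + ?c 1 * \<tau> + ?c 2 * \<tau> ^ 2 + ?c 3 * \<tau> ^ 3"
    by (simp add: numeral_eq_Suc)
  also have "\<dots> \<ge> ?c 0 - ?c 1 + ?c 2 - ?c 3"
    using assms by (intro cubic_ge_value_at_neg_one) (simp_all add: Pu_coeffs_def)
  finally have head: "(\<Sum>k\<le>3. ?c k * \<tau> ^ k) \<ge> ?c 0 - ?c 1 + ?c 2 - ?c 3" .
  have tail: "(\<Sum>k\<in>{4..22}. ?c k * \<tau> ^ k) \<ge> - (\<Sum>k\<in>{4..22}. \<bar>?c k\<bar>)"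
    using assms by (intro sum_power_ge_neg_sum_abs) simp
  have "?c 0 - ?c 1 + ?c 2 - ?c 3 > (\<Sum>k\<in>{4..22::nat}. \<bar>?c k\<bar>)"
    by (simp add: Pu_coeffs_def numeral_eq_Suc)
  then show ?thesis using split head tail by linarith
qed

end
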